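(* Let $\delta_1,\delta_2\in(0,1)$, $a_1,a_2\in(0,1)$ and $\varepsilon\in\mathbb{R}$ satisfy $$\mathrm{e}^{\varepsilon}\frac{a_1}{1-a_1}=\frac{1-\delta_1}{1-\delta_2}\,\frac{a_2}{1-a_2}.$$ Then for all positive integers $x,y$, $$\mathbb{E}\big[\exp(\varepsilon H^{(a_1,a_2)}(x,y))\big]=\big(\mathrm{e}^{\varepsilon}a_1+(1-a_1)\big)^y\big(\mathrm{e}^{-\varepsilon}a_2+(1-a_2)\big)^x .$$
   Context: Stochastic six vertex (S6V) model: vertices $(i,j)\in\mathbb{Z}_{>0}^2$, each with incoming edges from the left and from below and outgoing edges to the right and upward. Boundary data specify which edges $(0,j)\to(1,j)$ ($j\ge1$) and $(i,0)\to(i,1)$ ($i\ge1$) carry an incoming arrow. Vertices are sampled successively on antidiagonals $i+j=n$, independently given incoming arrows: none in gives none out; two in gives both out; a single arrow from below exits up with probability $\delta_1$, right with probability $1-\delta_1$; a single arrow from the left exits right with probability $\delta_2$, up with probability $1-\delta_2$. The height function $H(x,y)$ is the net number of arrows crossing the segment from $(0,0)$ to $(x+\epsilon,y+\epsilon)$ (small $\epsilon>0$), left-to-right crossings counting $+1$ and right-to-left $-1$. $(a_1,a_2)$ two-sided Bernoulli initial data: boundary arrows independent, present with probability $a_1$ on each edge $(0,j)\to(1,j)$ and with probability $a_2$ on each edge $(i,0)\to(i,1)$; $H^{(a_1,a_2)}$ is the corresponding height function. *)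

theory Defs
  imports Complex_Main
begin

text \<open>A configuration is a pair (Hs, Vs) of sets of occupied edges:
  (i,j) \<in> Hs means the horizontal edge (i,j) -> (i+1,j) carries an arrow (0 \<le> i \<le> x, 1 \<le> j \<le> y);
  (i,j) \<in> Vs means the vertical edge (i,j) -> (i,j+1) carries an arrow (1 \<le> i \<le> x, 0 \<le> j \<le> y).
  Edges (0,j) and (i,0) are the boundary (incoming) edges.\<close>

definition s6v_hedges :: "nat \<Rightarrow> nat \<Rightarrow> (nat \<times> nat) set" where
  "s6v_hedges x y = {0..x} \<times> {1..y}"

definition s6v_vedges :: "nat \<Rightarrow> nat \<Rightarrow> (nat \<times> nat) set" where
  "s6v_vedges x y = {1..x} \<times> {0..y}"

text \<open>Transition probability of a vertex: inputs l (from the left), b (from below);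
  outputs r (to the right), u (upward).\<close>
definition s6v_vertex_weight :: "real \<Rightarrow> real \<Rightarrow> bool \<Rightarrow> bool \<Rightarrow> bool \<Rightarrow> bool \<Rightarrow> real" where
  "s6v_vertex_weight d1 d2 l b r u =
     (if \<not> l \<and> \<not> b then (if \<not> r \<and> \<not> u then 1 else 0)
      else if l \<and> b then (if r \<and> u then 1 else 0)
      else if b then (if u \<and> \<not> r then d1 else if r \<and> \<not> u then 1 - d1 else 0)
      else (if r \<and> \<not> u then d2 else if u \<and> \<not> r then 1 - d2 else 0))"

definition s6v_config_weight ::
  "real \<Rightarrow> real \<Rightarrow> real \<Rightarrow> real \<Rightarrow> nat \<Rightarrow> nat \<Rightarrow> (nat \<times> nat) set \<Rightarrow> (nat \<times> nat) set \<Rightarrow> real" where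
  "s6v_config_weight d1 d2 a1 a2 x y Hs Vs =
     (\<Prod>j\<in>{1..y}. if (0, j) \<in> Hs then a1 else 1 - a1) *
     (\<Prod>i\<in>{1..x}. if (i, 0) \<in> Vs then a2 else 1 - a2) *
     (\<Prod>p\<in>{1..x} \<times> {1..y}.
        s6v_vertex_weight d1 d2 ((fst p - 1, snd p) \<in> Hs) ((fst p, snd p - 1) \<in> Vs)
                                (p \<in> Hs) (p \<in> Vs))"

text \<open>Height function H(x,y): net flux across a curve from (0,0) to (x+eps,y+eps),
  computed along the curve going up through the left boundary edges (0,j), j=1..y
  (left-to-right crossings, +1) and then right through the vertical edges (i,y)->(i,y+1),
  i=1..x (right-to-left crossings, -1).\<close>
definition s6v_height :: "nat \<Rightarrow> nat \<Rightarrow> (nat \<times> nat) set \<Rightarrow> (nat \<times> nat) set \<Rightarrow> int" where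
  "s6v_height x y Hs Vs =
     int (card {j\<in>{1..y}. (0, j) \<in> Hs}) - int (card {i\<in>{1..x}. (i, y) \<in> Vs})"

definition s6v_exp_moment :: "real \<Rightarrow> real \<Rightarrow> real \<Rightarrow> real \<Rightarrow> real \<Rightarrow> nat \<Rightarrow> nat \<Rightarrow> real" where
  "s6v_exp_moment d1 d2 a1 a2 eps x y =
     (\<Sum>Hs\<in>Pow (s6v_hedges x y). \<Sum>Vs\<in>Pow (s6v_vedges x y).
        s6v_config_weight d1 d2 a1 a2 x y Hs Vs * exp (eps * of_int (s6v_height x y Hs Vs)))"

end

theory Submission
  imports Defs
begin

text \<open>Exponential tilting of the left boundary turns the Bernoulli(a1) weights times
  e^(eps H) into C^y times Bernoulli(p1) weights, C = e^eps a1 + 1 - a1 and p1 = e^eps a1 / C,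
  leaving a factor e^(-eps) for every arrow leaving the top row. The hypothesis on the
  parameters says exactly that a vertex fed with independent Bernoulli(p1) and Bernoulli(a2)
  arrows emits independent Bernoulli(p1) and Bernoulli(a2) arrows (Burke property). Replacing
  the vertices one at a time, in increasing order of i + j, by such independent output
  arrows therefore preserves the total mass, and once all vertices are gone every edge is
  independent, so the top row contributes (e^(-eps) a2 + 1 - a2)^x.\<close>

definition bernoulli_weight :: "real \<Rightarrow> bool \<Rightarrow> real" where
  "bernoulli_weight p b = (if b then p else 1 - p)"

lemma sum_Pow_remove:
  assumes "finite E" "e \<in> E"
  shows "(\<Sum>S\<in>Pow E. F S) = (\<Sum>S\<in>Pow (E - {e}). \<Sum>B\<in>UNIV. F (if B then insert e S else S))"
proof -
  have E: "E = insert e (E - {e})" using assms(2) by blast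
  have "(\<Sum>S\<in>Pow E. F S) = (\<Sum>S\<in>Pow (E - {e}). F S) + (\<Sum>S\<in>insert e ` Pow (E - {e}). F S)"
    by (subst E, subst Pow_insert, rule sum.union_disjoint) (use assms(1) in auto)
  also have "(\<Sum>S\<in>insert e ` Pow (E - {e}). F S) = (\<Sum>S\<in>Pow (E - {e}). F (insert e S))"
    by (rule sum.reindex_cong[where l = "insert e"]) (auto simp: inj_on_def)
  finally show ?thesis by (simp add: UNIV_bool sum.distrib add.commute)
qed

lemma sum_Pow2_remove:
  assumes "finite E" "finite E'" "e \<in> E" "e' \<in> E'"
  shows "(\<Sum>S\<in>Pow E. \<Sum>T\<in>Pow E'. F S T) =
    (\<Sum>S\<in>Pow (E - {e}). \<Sum>T\<in>Pow (E' - {e'}). \<Sum>B\<in>UNIV. \<Sum>B'\<in>UNIV.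
       F (if B then insert e S else S) (if B' then insert e' T else T))"
  by (simp add: sum_Pow_remove[OF assms(1,3)] sum_Pow_remove[OF assms(2,4)] sum.swap[where B = "Pow (E' - {e'})"])

lemma sum_Pow_prod:
  fixes f :: "'a \<Rightarrow> bool \<Rightarrow> 'b::comm_semiring_1"
  assumes "finite E"
  shows "(\<Sum>S\<in>Pow E. \<Prod>e\<in>E. f e (e \<in> S)) = (\<Prod>e\<in>E. f e True + f e False)"
proof -
  have "(\<Prod>e\<in>E. f e (e \<in> S)) = (\<Prod>e\<in>S. f e True) * (\<Prod>e\<in>E - S. f e False)" if "S \<subseteq> E" for S
    using prod.subset_diff[OF that assms, of "\<lambda>e. f e (e \<in> S)"] by (simp add: mult.commute)
  then show ?thesis by (simp add: prod_add[OF assms])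
qed

lemma power_card_filter_eq_prod: "finite A \<Longrightarrow> c ^ card {j\<in>A. P j} = (\<Prod>j\<in>A. if P j then c else 1)"
  by (simp add: prod.inter_filter[symmetric])

lemma sum_Pow_bernoulli_power_card:
  assumes "finite E" "A \<subseteq> E"
  shows "(\<Sum>S\<in>Pow E. (\<Prod>e\<in>E. bernoulli_weight p (e \<in> S)) * c ^ card (S \<inter> A)) = (1 - p + p * c) ^ card A"
proof -
  have "c ^ card (S \<inter> A) = (\<Prod>e\<in>E. if e \<in> A \<and> e \<in> S then c else 1)" if "S \<subseteq> E" for S
  proof -
    have "S \<inter> A = {e\<in>E. e \<in> A \<and> e \<in> S}" using that by blast
    then show ?thesis using power_card_filter_eq_prod[OF assms(1)] by simp
  qed
  then have "(\<Sum>S\<in>Pow E. (\<Prod>e\<in>E. bernoulli_weight p (e \<in> S)) * c ^ card (S \<inter> A))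
      = (\<Sum>S\<in>Pow E. \<Prod>e\<in>E. bernoulli_weight p (e \<in> S) * (if e \<in> A \<and> e \<in> S then c else 1))"
    by (simp add: prod.distrib)
  also have "\<dots> = (\<Prod>e\<in>E. if e \<in> A then 1 - p + p * c else 1)"
    by (subst sum_Pow_prod[OF assms(1)]) (auto simp: bernoulli_weight_def intro: prod.cong)
  also have "\<dots> = (1 - p + p * c) ^ card A"
    using power_card_filter_eq_prod[OF assms(1), of "1 - p + p * c" "\<lambda>e. e \<in> A"] assms(2)
    by (simp add: Int_absorb1 Collect_conj_eq)
  finally show ?thesis .
qed

lemma prod_bernoulli_tilt:
  assumes "finite A" "t * a + (1 - a) \<noteq> 0"
  shows "(\<Prod>j\<in>A. bernoulli_weight a (P j)) * t ^ card {j\<in>A. P j}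
       = (t * a + (1 - a)) ^ card A * (\<Prod>j\<in>A. bernoulli_weight (t * a / (t * a + (1 - a))) (P j))"
proof -
  have "bernoulli_weight a B * (if B then t else 1)
      = (t * a + (1 - a)) * bernoulli_weight (t * a / (t * a + (1 - a))) B" for B
    using assms(2) by (cases B) (simp_all add: bernoulli_weight_def field_simps)
  then have "(\<Prod>j\<in>A. bernoulli_weight a (P j)) * t ^ card {j\<in>A. P j}
      = (\<Prod>j\<in>A. (t * a + (1 - a)) * bernoulli_weight (t * a / (t * a + (1 - a))) (P j))"
    by (simp add: power_card_filter_eq_prod[OF assms(1)] prod.distrib[symmetric])
  then show ?thesis by (simp add: prod.distrib)
qed

lemma sum_UNIV_bernoulli_weight: "(\<Sum>B\<in>UNIV. bernoulli_weight p B) = 1"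
  by (simp add: UNIV_bool bernoulli_weight_def)

lemma s6v_vertex_weight_burke:
  assumes "p1 * (1 - p2) * (1 - d2) = (1 - p1) * p2 * (1 - d1)"
  shows "(\<Sum>l\<in>UNIV. \<Sum>b\<in>UNIV.
            bernoulli_weight p1 l * bernoulli_weight p2 b * s6v_vertex_weight d1 d2 l b r u)
       = bernoulli_weight p1 r * bernoulli_weight p2 u"
  using assms by (cases r; cases u)
    (simp_all add: UNIV_bool bernoulli_weight_def s6v_vertex_weight_def algebra_simps)

definition s6v_vertex_weight_at ::
  "real \<Rightarrow> real \<Rightarrow> (nat \<times> nat) set \<Rightarrow> (nat \<times> nat) set \<Rightarrow> nat \<times> nat \<Rightarrow> real" where
  "s6v_vertex_weight_at d1 d2 Hs Vs v =
     s6v_vertex_weight d1 d2 ((fst v - 1, snd v) \<in> Hs) ((fst v, snd v - 1) \<in> Vs)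
       (v \<in> Hs) (v \<in> Vs)"

text \<open>The edge (i, j) of Hs or Vs is an output of the vertex (i, j), so the edges outside Q are
  exactly those not emitted by a vertex of Q; they carry independent Bernoulli weights, while
  the vertices of Q still carry their six vertex weights.\<close>

definition s6v_hybrid_weight :: "real \<Rightarrow> real \<Rightarrow> real \<Rightarrow> real \<Rightarrow> real \<Rightarrow> nat \<Rightarrow> nat
    \<Rightarrow> (nat \<times> nat) set \<Rightarrow> (nat \<times> nat) set \<Rightarrow> (nat \<times> nat) set \<Rightarrow> real" where
  "s6v_hybrid_weight d1 d2 p1 p2 c x y Q Hs Vs =
     (\<Prod>e\<in>s6v_hedges x y - Q. bernoulli_weight p1 (e \<in> Hs)) *
     (\<Prod>e\<in>s6v_vedges x y - Q. bernoulli_weight p2 (e \<in> Vs)) *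
     (\<Prod>v\<in>Q. s6v_vertex_weight_at d1 d2 Hs Vs v) * c ^ card (Vs \<inter> {1..x} \<times> {y})"

definition s6v_hybrid_total :: "real \<Rightarrow> real \<Rightarrow> real \<Rightarrow> real \<Rightarrow> real \<Rightarrow> nat \<Rightarrow> nat
    \<Rightarrow> (nat \<times> nat) set \<Rightarrow> real" where
  "s6v_hybrid_total d1 d2 p1 p2 c x y Q =
     (\<Sum>Hs\<in>Pow (s6v_hedges x y). \<Sum>Vs\<in>Pow (s6v_vedges x y).
        s6v_hybrid_weight d1 d2 p1 p2 c x y Q Hs Vs)"

lemma finite_s6v_edges: "finite (s6v_hedges x y)" "finite (s6v_vedges x y)"
  by (simp_all add: s6v_hedges_def s6v_vedges_def)

lemma prod_s6v_vertex_weight_at_cong: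
  assumes box: "Q \<subseteq> {1..x} \<times> {1..y}" and w: "(i, j) \<in> Q"
    and l: "(i - 1, j) \<notin> Q" and b: "(i, j - 1) \<notin> Q"
    and "Hs - {(i - 1, j)} = Hs' - {(i - 1, j)}" "Vs - {(i, j - 1)} = Vs' - {(i, j - 1)}"
  shows "(\<Prod>v\<in>Q - {(i, j)}. s6v_vertex_weight_at d1 d2 Hs Vs v)
       = (\<Prod>v\<in>Q - {(i, j)}. s6v_vertex_weight_at d1 d2 Hs' Vs' v)"
proof (rule prod.cong[OF refl])
  fix v assume v: "v \<in> Q - {(i, j)}"
  obtain a d where ad: "v = (a, d)" "1 \<le> a" "1 \<le> d"
    using v box by (cases v) auto
  have "1 \<le> i" "1 \<le> j" using w box by auto
  then have "(a - 1, d) \<noteq> (i - 1, j)" "(a, d - 1) \<noteq> (i, j - 1)" "v \<noteq> (i - 1, j)" "v \<noteq> (i, j - 1)"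
    using v ad l b by auto
  moreover have "(e \<in> Hs) = (e \<in> Hs')" if "e \<noteq> (i - 1, j)" for e
    using that assms(5) by blast
  moreover have "(e \<in> Vs) = (e \<in> Vs')" if "e \<noteq> (i, j - 1)" for e
    using that assms(6) by blast
  ultimately show "s6v_vertex_weight_at d1 d2 Hs Vs v = s6v_vertex_weight_at d1 d2 Hs' Vs' v"
    unfolding s6v_vertex_weight_at_def ad(1) by simp
qed

lemma s6v_hybrid_weight_factor_vertex:
  assumes box: "Q \<subseteq> {1..x} \<times> {1..y}" and w: "(i, j) \<in> Q"
    and l: "(i - 1, j) \<notin> Q" and b: "(i, j - 1) \<notin> Q"
  obtains rest where
    "\<And>Hs Vs. s6v_hybrid_weight d1 d2 p1 p2 c x y Q Hs Vs =
       bernoulli_weight p1 ((i - 1, j) \<in> Hs) * bernoulli_weight p2 ((i, j - 1) \<in> Vs) *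
       s6v_vertex_weight d1 d2 ((i - 1, j) \<in> Hs) ((i, j - 1) \<in> Vs) ((i, j) \<in> Hs) ((i, j) \<in> Vs) *
       rest Hs Vs"
    "\<And>Hs Vs. s6v_hybrid_weight d1 d2 p1 p2 c x y (Q - {(i, j)}) Hs Vs =
       bernoulli_weight p1 ((i - 1, j) \<in> Hs) * bernoulli_weight p2 ((i, j - 1) \<in> Vs) *
       (bernoulli_weight p1 ((i, j) \<in> Hs) * bernoulli_weight p2 ((i, j) \<in> Vs)) * rest Hs Vs"
    "\<And>Hs Vs Hs' Vs'. Hs - {(i - 1, j)} = Hs' - {(i - 1, j)} \<Longrightarrow> Vs - {(i, j - 1)} = Vs' - {(i, j - 1)} \<Longrightarrow>
       rest Hs Vs = rest Hs' Vs'"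
proof -
  define HE VE where "HE = s6v_hedges x y" and "VE = s6v_vedges x y"
  define l b w where "l = (i - 1, j)" and "b = (i, j - 1)" and "w = (i, j)"
  let ?bh = "\<lambda>Hs e. bernoulli_weight p1 (e \<in> Hs)" and ?bv = "\<lambda>Vs e. bernoulli_weight p2 (e \<in> Vs)"
  have ij: "1 \<le> i" "i \<le> x" "1 \<le> j" "j \<le> y" using box w by auto
  have fin: "finite HE" "finite VE" "finite Q"
    using finite_s6v_edges finite_subset[OF box] unfolding HE_def VE_def by auto
  have edges: "l \<in> HE - Q" "b \<in> VE - Q" "w \<in> HE" "w \<in> VE" "w \<in> Q" "w \<noteq> l" "w \<noteq> b"
    using ij w l b unfolding HE_def VE_def s6v_hedges_def s6v_vedges_def l_def b_def w_def by auto
  define rest where "rest Hs Vs = (\<Prod>e\<in>HE - Q - {l}. ?bh Hs e) * (\<Prod>e\<in>VE - Q - {b}. ?bv Vs e) *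
     (\<Prod>v\<in>Q - {w}. s6v_vertex_weight_at d1 d2 Hs Vs v) * c ^ card (Vs \<inter> {1..x} \<times> {y})" for Hs Vs
  have "s6v_hybrid_weight d1 d2 p1 p2 c x y Q Hs Vs = ?bh Hs l * ?bv Vs b *
      s6v_vertex_weight d1 d2 (l \<in> Hs) (b \<in> Vs) (w \<in> Hs) (w \<in> Vs) * rest Hs Vs" for Hs Vs
    using edges fin unfolding s6v_hybrid_weight_def rest_def HE_def[symmetric] VE_def[symmetric]
    by (simp add: prod.remove[of "HE - Q" l] prod.remove[of "VE - Q" b] prod.remove[of Q w]
        s6v_vertex_weight_at_def l_def b_def w_def)
  moreover have "s6v_hybrid_weight d1 d2 p1 p2 c x y (Q - {w}) Hs Vs = ?bh Hs l * ?bv Vs b *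
      (?bh Hs w * ?bv Vs w) * rest Hs Vs" for Hs Vs
  proof -
    have "HE - (Q - {w}) = insert w (HE - Q)" "VE - (Q - {w}) = insert w (VE - Q)"
      using edges by auto
    then show ?thesis
      using edges fin unfolding s6v_hybrid_weight_def rest_def HE_def[symmetric] VE_def[symmetric]
      by (simp add: prod.remove[of "HE - Q" l] prod.remove[of "VE - Q" b])
  qed
  moreover have "rest Hs Vs = rest Hs' Vs'" if local: "Hs - {l} = Hs' - {l}" "Vs - {b} = Vs' - {b}"
    for Hs Vs Hs' Vs'
  proof -
    have "(\<Prod>e\<in>HE - Q - {l}. ?bh Hs e) = (\<Prod>e\<in>HE - Q - {l}. ?bh Hs' e)"
      using local(1) by (intro prod.cong refl arg_cong[where f = "bernoulli_weight p1"]) blast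
    moreover have "(\<Prod>e\<in>VE - Q - {b}. ?bv Vs e) = (\<Prod>e\<in>VE - Q - {b}. ?bv Vs' e)"
      using local(2) by (intro prod.cong refl arg_cong[where f = "bernoulli_weight p2"]) blast
    moreover have "Vs \<inter> {1..x} \<times> {y} = Vs' \<inter> {1..x} \<times> {y}"
    proof -
      have "b \<notin> {1..x} \<times> {y}" using ij unfolding b_def by auto
      then show ?thesis using local(2) by blast
    qed
    ultimately show ?thesis
      using prod_s6v_vertex_weight_at_cong[OF box w l b local[unfolded l_def b_def]]
      unfolding rest_def w_def by simp
  qed
  ultimately show thesis
    by (rule that[of rest, folded l_def b_def w_def])
qed

lemma s6v_hybrid_total_remove_vertex:
  assumes box: "Q \<subseteq> {1..x} \<times> {1..y}" and w: "(i, j) \<in> Q"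
    and l: "(i - 1, j) \<notin> Q" and b: "(i, j - 1) \<notin> Q"
    and burke: "p1 * (1 - p2) * (1 - d2) = (1 - p1) * p2 * (1 - d1)"
  shows "s6v_hybrid_total d1 d2 p1 p2 c x y Q = s6v_hybrid_total d1 d2 p1 p2 c x y (Q - {(i, j)})"
proof -
  define HE VE where "HE = s6v_hedges x y" and "VE = s6v_vedges x y"
  define l b w where "l = (i - 1, j)" and "b = (i, j - 1)" and "w = (i, j)"
  let ?bh = "\<lambda>Hs e. bernoulli_weight p1 (e \<in> Hs)" and ?bv = "\<lambda>Vs e. bernoulli_weight p2 (e \<in> Vs)"
  obtain rest where weight_Q: "\<And>Hs Vs. s6v_hybrid_weight d1 d2 p1 p2 c x y Q Hs Vs =
       ?bh Hs l * ?bv Vs b * s6v_vertex_weight d1 d2 (l \<in> Hs) (b \<in> Vs) (w \<in> Hs) (w \<in> Vs) * rest Hs Vs"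
    and weight_Q_minus: "\<And>Hs Vs. s6v_hybrid_weight d1 d2 p1 p2 c x y (Q - {w}) Hs Vs =
       ?bh Hs l * ?bv Vs b * (?bh Hs w * ?bv Vs w) * rest Hs Vs"
    and rest_local: "\<And>Hs Vs Hs' Vs'. Hs - {l} = Hs' - {l} \<Longrightarrow> Vs - {b} = Vs' - {b} \<Longrightarrow>
       rest Hs Vs = rest Hs' Vs'"
    using s6v_hybrid_weight_factor_vertex[OF box w l b,
        where ?d1.0 = d1 and ?d2.0 = d2 and ?p1.0 = p1 and ?p2.0 = p2 and c = c]
    unfolding l_def b_def w_def by blast
  have "1 \<le> i" "i \<le> x" "1 \<le> j" "j \<le> y" using box w by auto
  then have edges: "l \<in> HE" "b \<in> VE" "w \<noteq> l" "w \<noteq> b"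
    unfolding HE_def VE_def s6v_hedges_def s6v_vedges_def l_def b_def w_def by auto
  let ?H = "\<lambda>S L. if L then insert l S else S" and ?V = "\<lambda>T B. if B then insert b T else T"
  \<comment> \<open>Summing out the inputs l and b of w: the Burke property turns the vertex weight into the
    output Bernoulli weights, and these are exactly what remains after removing w.\<close>
  have local_sums:
    "(\<Sum>L\<in>UNIV. \<Sum>B\<in>UNIV. s6v_hybrid_weight d1 d2 p1 p2 c x y Q (?H S L) (?V T B))
       = ?bh S w * ?bv T w * rest S T"
    "(\<Sum>L\<in>UNIV. \<Sum>B\<in>UNIV. s6v_hybrid_weight d1 d2 p1 p2 c x y (Q - {w}) (?H S L) (?V T B))
       = ?bh S w * ?bv T w * rest S T"
    if "S \<subseteq> HE - {l}" "T \<subseteq> VE - {b}" for S T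
  proof -
    have upd: "l \<in> ?H S L \<longleftrightarrow> L" "b \<in> ?V T B \<longleftrightarrow> B"
      "w \<in> ?H S L \<longleftrightarrow> w \<in> S" "w \<in> ?V T B \<longleftrightarrow> w \<in> T"
      "rest (?H S L) (?V T B) = rest S T" for L B
      using that edges by (auto intro: rest_local)
    show "(\<Sum>L\<in>UNIV. \<Sum>B\<in>UNIV. s6v_hybrid_weight d1 d2 p1 p2 c x y Q (?H S L) (?V T B))
       = ?bh S w * ?bv T w * rest S T"
      by (simp add: weight_Q upd sum_distrib_right[symmetric] s6v_vertex_weight_burke[OF burke])
    show "(\<Sum>L\<in>UNIV. \<Sum>B\<in>UNIV. s6v_hybrid_weight d1 d2 p1 p2 c x y (Q - {w}) (?H S L) (?V T B))
       = ?bh S w * ?bv T w * rest S T"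
      by (simp add: weight_Q_minus upd sum_distrib_left[symmetric] sum_distrib_right[symmetric]
          sum_UNIV_bernoulli_weight)
  qed
  have "finite HE" "finite VE"
    unfolding HE_def VE_def by (rule finite_s6v_edges)+
  then show ?thesis
    unfolding s6v_hybrid_total_def HE_def[symmetric] VE_def[symmetric] w_def[symmetric]
    using edges by (simp add: sum_Pow2_remove[of HE VE l b] local_sums)
qed

lemma s6v_hybrid_total_eq_empty:
  assumes "Q \<subseteq> {1..x} \<times> {1..y}"
    and burke: "p1 * (1 - p2) * (1 - d2) = (1 - p1) * p2 * (1 - d1)"
  shows "s6v_hybrid_total d1 d2 p1 p2 c x y Q = s6v_hybrid_total d1 d2 p1 p2 c x y {}"
proof -
  have "finite Q" using assms(1) finite_subset by blast
  then show ?thesis using assms(1)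
  \<comment> \<open>Each inserted vertex minimises i + j, so its input edges are not emitted inside Q.\<close>
  proof (induction Q rule: finite_ranking_induct[where f = "\<lambda>v. - int (fst v + snd v)"])
    case empty
    then show ?case by simp
  next
    case (insert v Q)
    show ?case
    proof (cases "v \<in> Q")
      case True
      then show ?thesis using insert by (simp add: insert_absorb)
    next
      case False
      obtain i j where v: "v = (i, j)" "1 \<le> i" "1 \<le> j" using insert.prems by force
      have "(i, j) \<in> insert v Q" "(i - 1, j) \<notin> insert v Q" "(i, j - 1) \<notin> insert v Q"
        using insert.hyps(2) v by force+
      then have "s6v_hybrid_total d1 d2 p1 p2 c x y (insert v Q)
          = s6v_hybrid_total d1 d2 p1 p2 c x y (insert v Q - {v})"
        unfolding v(1) by (rule s6v_hybrid_total_remove_vertex[OF insert.prems[unfolded v(1)] _ _ _ burke])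
      then show ?thesis using insert False by simp
    qed
  qed
qed

lemma s6v_hybrid_total_empty: "s6v_hybrid_total d1 d2 p1 p2 c x y {} = (1 - p2 + p2 * c) ^ x"
proof -
  have top: "{1..x} \<times> {y} \<subseteq> s6v_vedges x y" "card ({1..x} \<times> {y}) = x"
    by (auto simp: s6v_vedges_def)
  have "s6v_hybrid_total d1 d2 p1 p2 c x y {}
     = (\<Sum>Hs\<in>Pow (s6v_hedges x y).
          (\<Prod>e\<in>s6v_hedges x y. bernoulli_weight p1 (e \<in> Hs)) * 1 ^ card (Hs \<inter> {})) *
       (\<Sum>Vs\<in>Pow (s6v_vedges x y).
          (\<Prod>e\<in>s6v_vedges x y. bernoulli_weight p2 (e \<in> Vs)) * c ^ card (Vs \<inter> {1..x} \<times> {y}))"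
    unfolding s6v_hybrid_total_def s6v_hybrid_weight_def sum_product by (simp add: mult.assoc)
  also have "\<dots> = (1 - p2 + p2 * c) ^ x"
    using sum_Pow_bernoulli_power_card[OF finite_s6v_edges(1) empty_subsetI]
      sum_Pow_bernoulli_power_card[OF finite_s6v_edges(2) top(1)] top(2) by simp
  finally show ?thesis .
qed

lemma s6v_tilted_weight_eq_hybrid:
  fixes a1 eps :: real
  defines "C \<equiv> exp eps * a1 + (1 - a1)"
  assumes "C \<noteq> 0"
  shows "s6v_config_weight d1 d2 a1 a2 x y Hs Vs * exp (eps * of_int (s6v_height x y Hs Vs))
     = C ^ y * s6v_hybrid_weight d1 d2 (exp eps * a1 / C) a2 (exp (- eps)) x y ({1..x} \<times> {1..y}) Hs Vs"
proof -
  let ?box = "{1..x} \<times> {1..y}"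
  have left: "s6v_hedges x y - ?box = (\<lambda>j. (0, j)) ` {1..y}"
    and bottom: "s6v_vedges x y - ?box = (\<lambda>i. (i, 0)) ` {1..x}"
    and top: "Vs \<inter> {1..x} \<times> {y} = (\<lambda>i. (i, y)) ` {i\<in>{1..x}. (i, y) \<in> Vs}"
    by (auto simp: s6v_hedges_def s6v_vedges_def)
  have exp_height: "exp (eps * of_int (s6v_height x y Hs Vs))
      = exp eps ^ card {j\<in>{1..y}. (0, j) \<in> Hs} * exp (- eps) ^ card (Vs \<inter> {1..x} \<times> {y})"
    unfolding s6v_height_def top
    by (simp add: card_image inj_on_def exp_of_nat_mult[symmetric] exp_add[symmetric] algebra_simps)
  have "(\<Prod>j\<in>{1..y}. bernoulli_weight a1 ((0, j) \<in> Hs)) * exp eps ^ card {j\<in>{1..y}. (0, j) \<in> Hs}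
      = C ^ y * (\<Prod>j\<in>{1..y}. bernoulli_weight (exp eps * a1 / C) ((0, j) \<in> Hs))"
    using prod_bernoulli_tilt[of "{1..y}" "exp eps" a1] assms by simp
  moreover have "(\<Prod>p\<in>?box. s6v_vertex_weight d1 d2 ((fst p - 1, snd p) \<in> Hs) ((fst p, snd p - 1) \<in> Vs)
      (p \<in> Hs) (p \<in> Vs)) = (\<Prod>v\<in>?box. s6v_vertex_weight_at d1 d2 Hs Vs v)"
    unfolding s6v_vertex_weight_at_def ..
  ultimately show ?thesis
    unfolding s6v_config_weight_def s6v_hybrid_weight_def exp_height left bottom
    by (simp add: prod.reindex inj_on_def bernoulli_weight_def[symmetric] algebra_simps)
qed

lemma burke_condition_tilted:
  fixes a1 a2 d1 d2 eps :: real
  assumes "0 < a1" "a1 < 1" "a2 < 1" "d2 < 1"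
    and "exp eps * (a1 / (1 - a1)) = (1 - d1) / (1 - d2) * (a2 / (1 - a2))"
  defines "p1 \<equiv> exp eps * a1 / (exp eps * a1 + (1 - a1))"
  shows "p1 * (1 - a2) * (1 - d2) = (1 - p1) * a2 * (1 - d1)"
proof -
  have "exp eps * a1 * (1 - a2) * (1 - d2)
      = exp eps * (a1 / (1 - a1)) * ((1 - a1) * (1 - a2) * (1 - d2))"
    using \<open>a1 < 1\<close> by simp
  also have "\<dots> = (1 - d1) / (1 - d2) * (a2 / (1 - a2)) * ((1 - a1) * (1 - a2) * (1 - d2))"
    using assms(5) by simp
  also have "\<dots> = (1 - a1) * a2 * (1 - d1)"
    using \<open>d2 < 1\<close> \<open>a2 < 1\<close> by simp
  finally have "exp eps * a1 * (1 - a2) * (1 - d2) = (1 - a1) * a2 * (1 - d1)" .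
  moreover have "exp eps * a1 + (1 - a1) > 0"
    using assms(1,2) by (simp add: add_pos_pos)
  ultimately show ?thesis
    unfolding p1_def by (simp add: field_simps)
qed

theorem lemma3p2:
  fixes d1 d2 a1 a2 eps :: real and x y :: nat
  assumes "0 < d1" "d1 < 1" "0 < d2" "d2 < 1"
    and "0 < a1" "a1 < 1" "0 < a2" "a2 < 1"
    and "exp eps * (a1 / (1 - a1)) = (1 - d1) / (1 - d2) * (a2 / (1 - a2))"
    and "0 < x" "0 < y"
  shows "s6v_exp_moment d1 d2 a1 a2 eps x y
           = (exp eps * a1 + (1 - a1)) ^ y * (exp (- eps) * a2 + (1 - a2)) ^ x"
proof -
  define C where "C = exp eps * a1 + (1 - a1)"
  define p1 where "p1 = exp eps * a1 / C"
  have "C > 0" unfolding C_def using assms by (simp add: add_pos_pos)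
  have burke: "p1 * (1 - a2) * (1 - d2) = (1 - p1) * a2 * (1 - d1)"
    unfolding p1_def C_def using burke_condition_tilted assms by blast
  have "s6v_exp_moment d1 d2 a1 a2 eps x y
      = C ^ y * s6v_hybrid_total d1 d2 p1 a2 (exp (- eps)) x y ({1..x} \<times> {1..y})"
    unfolding s6v_exp_moment_def s6v_hybrid_total_def p1_def C_def
    using s6v_tilted_weight_eq_hybrid \<open>C > 0\<close> by (simp add: C_def sum_distrib_left)
  also have "\<dots> = C ^ y * s6v_hybrid_total d1 d2 p1 a2 (exp (- eps)) x y {}"
    using s6v_hybrid_total_eq_empty[OF subset_refl burke] by simp
  also have "\<dots> = C ^ y * (exp (- eps) * a2 + (1 - a2)) ^ x"
    by (simp add: s6v_hybrid_total_empty algebra_simps)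
  finally show ?thesis unfolding C_def .
qed

end
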